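(* Let $K\subseteq\mathbb{R}^p$ be compact, $S_0$ a set of covariate values, $\sigma>0$, and $r$ such that for every $x$, $\beta\mapsto r(x,\beta)$ is a polynomial of degree at most $\zeta$ (an integer $\ge1$); assume $\mathfrak{L}_{S_0}:=\sup_{x\in S_0}\mathfrak{L}(x)\in(0,\infty)$. Let $G$ be a probability measure supported on $K$. Then for every $a\ge1$ there exists a discrete probability measure $G'$ supported on at most $$(2\lfloor 13.5a^2\rfloor\zeta+1)^p\,N(a\sigma/\mathfrak{L}_{S_0},K)+1$$ points of $K$ such that $$\sup_{(x,y)\in S_0\times\mathbb{R}}|f^G_x(y)-f^{G'}_x(y)|\le\Big(1+\frac{1}{\sqrt{2\pi}}\Big)\frac{e^{-a^2/2}}{(2\pi)^{1/2}\sigma}.$$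
   Context: $\phi$ is the standard normal density; $f^G_x(y):=\int\frac1\sigma\phi\big(\frac{y-r(x,\beta)}{\sigma}\big)\,dG(\beta)$. $\mathfrak{L}(x):=\sup_{\beta_1,\beta_2\in K,\beta_1\ne\beta_2}\frac{|r(x,\beta_1)-r(x,\beta_2)|}{\|\beta_1-\beta_2\|}$. $N(\epsilon,K)$ is the $\epsilon$-covering number of $K$ in the Euclidean metric: the smallest cardinality of a set $S$ with $\sup_{t\in K}\inf_{s\in S}\|s-t\|\le\epsilon$. *)

theory Defs
  imports "HOL-Probability.Probability"
begin

definition mix_density ::
  "('x \<Rightarrow> 'b \<Rightarrow> real) \<Rightarrow> real \<Rightarrow> 'b measure \<Rightarrow> 'x \<Rightarrow> real \<Rightarrow> real" where
  "mix_density r \<sigma> G x y =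
     (\<integral>\<beta>. (1 / \<sigma>) * std_normal_density ((y - r x \<beta>) / \<sigma>) \<partial>G)"

definition poly_deg_le :: "nat \<Rightarrow> (real ^ 'p \<Rightarrow> real) \<Rightarrow> bool" where
  "poly_deg_le d f \<longleftrightarrow>
     (\<exists>A :: ('p \<Rightarrow> nat) set. \<exists>c :: ('p \<Rightarrow> nat) \<Rightarrow> real.
        finite A \<and> (\<forall>\<alpha>\<in>A. (\<Sum>i\<in>UNIV. \<alpha> i) \<le> d) \<and>
        (\<forall>\<beta>. f \<beta> = (\<Sum>\<alpha>\<in>A. c \<alpha> * (\<Prod>i\<in>UNIV. (\<beta> $ i) ^ (\<alpha> i)))))"

text \<open>Lipschitz constant L(x) on K (in ereal, so that an infinite supremum is +infinity).\<close>
definition lipK :: "('x \<Rightarrow> 'b::real_normed_vector \<Rightarrow> real) \<Rightarrow> 'b set \<Rightarrow> 'x \<Rightarrow> ereal" where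
  "lipK r K x = (SUP \<beta>\<in>{(b1, b2). b1 \<in> K \<and> b2 \<in> K \<and> b1 \<noteq> b2}.
      ereal (\<bar>r x (fst \<beta>) - r x (snd \<beta>)\<bar> / norm (fst \<beta> - snd \<beta>)))"

definition lipS :: "('x \<Rightarrow> 'b::real_normed_vector \<Rightarrow> real) \<Rightarrow> 'b set \<Rightarrow> 'x set \<Rightarrow> ereal" where
  "lipS r K S0 = (SUP x\<in>S0. lipK r K x)"

definition covering_number :: "real \<Rightarrow> 'b::metric_space set \<Rightarrow> nat" where
  "covering_number \<epsilon> K =
     (LEAST n. \<exists>S. finite S \<and> card S = n \<and> (\<forall>t\<in>K. \<exists>s\<in>S. dist s t \<le> \<epsilon>))"

end

theory Submission
  imports Defs
begin

text \<open>
  Cover K by N = N(a sigma/L, K) balls of radius eps = a sigma/L and refine the cover to a fine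
  Borel partition of K; moving the mass of each cell to one representative point costs only a
  small Lipschitz error. Inside one ball the regression function varies by at most 2 a sigma, so
  on the cells of that ball the Gaussian kernel is either uniformly below
  exp(-a^2/2) / (sqrt(2 pi) sigma), or it agrees up to that error with its Taylor polynomial of
  degree k = floor(13.5 a^2) in -((y - r)/sigma)^2/2, which is a polynomial of degree 2 k zeta
  in beta. Hence every reweighting of the representatives that preserves, ball by ball, all
  moments of degree at most 2 k zeta changes the mixture density by at most that error, and a
  Caratheodory argument finds such a reweighting supported on at most (2 k zeta + 1)^p N + 1
  points.
\<close>

section \<open>Polynomial functions and their moments\<close>

definition monomial :: "('p \<Rightarrow> nat) \<Rightarrow> real ^ 'p \<Rightarrow> real" where
  "monomial \<alpha> \<beta> = (\<Prod>i\<in>UNIV. (\<beta> $ i) ^ (\<alpha> i))"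

inductive polyfun :: "nat \<Rightarrow> (real ^ 'p \<Rightarrow> real) \<Rightarrow> bool" for d where
  polyfun_monomial: "sum \<alpha> UNIV \<le> d \<Longrightarrow> polyfun d (\<lambda>\<beta>. c * monomial \<alpha> \<beta>)"
| polyfun_add: "polyfun d f \<Longrightarrow> polyfun d g \<Longrightarrow> polyfun d (\<lambda>\<beta>. f \<beta> + g \<beta>)"

lemma monomial_0 [simp]: "monomial (\<lambda>_. 0) \<beta> = 1"
  by (simp add: monomial_def)

lemma monomial_add: "monomial (\<lambda>i. \<alpha> i + \<alpha>' i) \<beta> = monomial \<alpha> \<beta> * monomial \<alpha>' \<beta>"
  by (simp add: monomial_def power_add prod.distrib)

lemma continuous_on_monomial: "continuous_on S (monomial \<alpha>)"
  unfolding monomial_def by (intro continuous_intros)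

lemma polyfun_const: "polyfun d (\<lambda>\<beta>. c)"
  using polyfun_monomial[of "\<lambda>_. 0" d c] by simp

lemma polyfun_mono: "polyfun d f \<Longrightarrow> d \<le> d' \<Longrightarrow> polyfun d' f"
  by (induction rule: polyfun.induct) (auto intro: polyfun.intros)

lemma polyfun_cmult: "polyfun d f \<Longrightarrow> polyfun d (\<lambda>\<beta>. c * f \<beta>)"
proof (induction rule: polyfun.induct)
  case (polyfun_monomial \<alpha> c')
  then show ?case using polyfun.polyfun_monomial[of \<alpha> d "c * c'"] by (simp add: mult.assoc)
next
  case (polyfun_add f g)
  then show ?case using polyfun.polyfun_add[OF polyfun_add.IH] by (simp add: distrib_left)
qed

lemma polyfun_mult_monomial:
  "polyfun d f \<Longrightarrow> sum \<alpha> UNIV \<le> e \<Longrightarrow> polyfun (d + e) (\<lambda>\<beta>. f \<beta> * (c * monomial \<alpha> \<beta>))"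
proof (induction rule: polyfun.induct)
  case (polyfun_monomial \<alpha>' c')
  then have "sum (\<lambda>i. \<alpha>' i + \<alpha> i) UNIV \<le> d + e" by (simp add: sum.distrib)
  from polyfun.polyfun_monomial[OF this, of "c' * c"] show ?case by (simp add: monomial_add mult_ac)
next
  case (polyfun_add f g)
  then show ?case using polyfun.polyfun_add[OF polyfun_add.IH] by (simp add: distrib_right)
qed

lemma polyfun_mult:
  assumes "polyfun d f" "polyfun e g"
  shows "polyfun (d + e) (\<lambda>\<beta>. f \<beta> * g \<beta>)"
  using assms(2)
proof (induction rule: polyfun.induct)
  case (polyfun_monomial \<alpha> c)
  then show ?case using polyfun_mult_monomial[OF assms(1)] by blast
next
  case (polyfun_add g1 g2)
  then show ?case using polyfun.polyfun_add[OF polyfun_add.IH] by (simp add: distrib_left)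
qed

lemma polyfun_power: "polyfun d f \<Longrightarrow> polyfun (m * d) (\<lambda>\<beta>. f \<beta> ^ m)"
proof (induction m)
  case 0
  then show ?case using polyfun_const[of 0 1] by simp
next
  case (Suc m)
  then show ?case using polyfun_mult[OF Suc.prems Suc.IH] by (simp add: add.commute)
qed

lemma polyfun_sum:
  "finite A \<Longrightarrow> (\<And>m. m \<in> A \<Longrightarrow> polyfun d (f m)) \<Longrightarrow> polyfun d (\<lambda>\<beta>. \<Sum>m\<in>A. f m \<beta>)"
  by (induction A rule: finite_induct) (auto intro: polyfun_const polyfun.polyfun_add)

lemma polyfun_standardize: "polyfun d R \<Longrightarrow> polyfun d (\<lambda>\<beta>. (y - R \<beta>) / \<sigma>)"
proof -
  assume "polyfun d R"
  then have "polyfun d (\<lambda>\<beta>. (1 / \<sigma>) * (y + (- 1) * R \<beta>))"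
    by (intro polyfun_cmult polyfun_add polyfun_const)
  moreover have "(\<lambda>\<beta>. (1 / \<sigma>) * (y + (- 1) * R \<beta>)) = (\<lambda>\<beta>. (y - R \<beta>) / \<sigma>)"
    by (simp add: fun_eq_iff divide_simps)
  ultimately show ?thesis by simp
qed

lemma continuous_on_polyfun: "polyfun d f \<Longrightarrow> continuous_on S f"
  by (induction rule: polyfun.induct) (auto intro!: continuous_intros continuous_on_monomial)

lemma polyfun_if_poly_deg_le: "poly_deg_le d f \<Longrightarrow> polyfun d f"
proof -
  assume "poly_deg_le d f"
  then obtain A c where A: "finite A" "\<forall>\<alpha>\<in>A. sum \<alpha> UNIV \<le> d"
    and f: "\<forall>\<beta>. f \<beta> = (\<Sum>\<alpha>\<in>A. c \<alpha> * monomial \<alpha> \<beta>)"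
    unfolding poly_deg_le_def monomial_def by blast
  have "polyfun d (\<lambda>\<beta>. \<Sum>\<alpha>\<in>A. c \<alpha> * monomial \<alpha> \<beta>)"
    using A by (intro polyfun_sum) (auto intro: polyfun_monomial)
  moreover have "f = (\<lambda>\<beta>. \<Sum>\<alpha>\<in>A. c \<alpha> * monomial \<alpha> \<beta>)"
    using f by (simp add: fun_eq_iff)
  ultimately show ?thesis by simp
qed

definition same_moments ::
  "nat \<Rightarrow> 'q set \<Rightarrow> ('q \<Rightarrow> real ^ 'p) \<Rightarrow> ('q \<Rightarrow> real) \<Rightarrow> ('q \<Rightarrow> real) \<Rightarrow> bool" where
  "same_moments d Q c w u \<longleftrightarrow>
     (\<forall>\<alpha>. sum \<alpha> UNIV \<le> d \<longrightarrow> (\<Sum>q\<in>Q. w q * monomial \<alpha> (c q)) = (\<Sum>q\<in>Q. u q * monomial \<alpha> (c q)))"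

lemma same_moments_mass: "same_moments d Q c w u \<Longrightarrow> sum w Q = sum u Q"
  unfolding same_moments_def by (drule spec[of _ "\<lambda>_. 0"]) simp

lemma sum_polyfun_eq_if_same_moments:
  assumes "polyfun d f" "same_moments d Q c w u"
  shows "(\<Sum>q\<in>Q. w q * f (c q)) = (\<Sum>q\<in>Q. u q * f (c q))"
  using assms(1)
proof (induction rule: polyfun.induct)
  case (polyfun_monomial \<alpha> a)
  have "(\<Sum>q\<in>Q. v q * (a * monomial \<alpha> (c q))) = a * (\<Sum>q\<in>Q. v q * monomial \<alpha> (c q))"
    for v :: "'b \<Rightarrow> real"
    by (simp add: sum_distrib_left algebra_simps)
  moreover have "(\<Sum>q\<in>Q. w q * monomial \<alpha> (c q)) = (\<Sum>q\<in>Q. u q * monomial \<alpha> (c q))"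
    using polyfun_monomial assms(2) unfolding same_moments_def by blast
  ultimately show ?case by simp
next
  case (polyfun_add f g)
  then show ?case by (simp add: distrib_left sum.distrib)
qed

section \<open>A Caratheodory reduction for weights\<close>

lemma sum_eliminate_coordinate:
  fixes c f g :: "'q \<Rightarrow> real"
  assumes "finite Q" "q0 \<in> Q" "f q0 \<noteq> 0"
  shows "(\<Sum>q\<in>Q. (c(q0 := - (\<Sum>q\<in>Q - {q0}. c q * f q) / f q0)) q * g q)
    = (\<Sum>q\<in>Q - {q0}. c q * (g q - g q0 / f q0 * f q))"
proof -
  let ?c = "c(q0 := - (\<Sum>q\<in>Q - {q0}. c q * f q) / f q0)"
  have "(\<Sum>q\<in>Q. ?c q * g q) = ?c q0 * g q0 + (\<Sum>q\<in>Q - {q0}. c q * g q)"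
    using assms by (simp add: sum.remove)
  also have "\<dots> = (\<Sum>q\<in>Q - {q0}. c q * g q) - g q0 / f q0 * (\<Sum>q\<in>Q - {q0}. c q * f q)"
    by simp
  also have "\<dots> = (\<Sum>q\<in>Q - {q0}. c q * (g q - g q0 / f q0 * f q))"
    by (simp add: right_diff_distrib sum_subtractf sum_distrib_left mult.left_commute)
  finally show ?thesis .
qed

lemma exists_nonzero_annihilator:
  fixes F :: "('q \<Rightarrow> real) set"
  assumes "finite Q" "finite F" "card F < card Q"
  shows "\<exists>c. (\<exists>q\<in>Q. c q \<noteq> 0) \<and> (\<forall>f\<in>F. (\<Sum>q\<in>Q. c q * f q) = 0)"
  using assms
proof (induction "card F" arbitrary: F Q rule: less_induct)
  case less
  show ?case
  proof (cases "\<forall>f\<in>F. \<forall>q\<in>Q. f q = 0")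
    case True
    moreover have "Q \<noteq> {}" using less.prems by auto
    ultimately show ?thesis by (intro exI[of _ "\<lambda>_. 1"]) auto
  next
    case False
    then obtain f q0 where f: "f \<in> F" and q0: "q0 \<in> Q" "f q0 \<noteq> 0" by blast
    \<comment> \<open>eliminate the coordinate \<open>q0\<close> with the help of \<open>f\<close>\<close>
    define elim where "elim g q = g q - g q0 / f q0 * f q" for g :: "'q \<Rightarrow> real" and q
    define Q0 where "Q0 = Q - {q0}"
    have "card (elim ` (F - {f})) \<le> card F - 1"
      using card_image_le[of "F - {f}" elim] f less.prems(2) by (simp add: card_Diff_singleton)
    moreover have "card F > 0" using f less.prems(2) card_gt_0_iff by blast
    ultimately have "card (elim ` (F - {f})) < card F" "card (elim ` (F - {f})) < card Q0"
      using q0 less.prems unfolding Q0_def by (simp_all add: card_Diff_singleton)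
    then obtain c0 where c0: "\<exists>q\<in>Q0. c0 q \<noteq> 0"
      "\<forall>g\<in>elim ` (F - {f}). (\<Sum>q\<in>Q0. c0 q * g q) = 0"
      using less.hyps[of "elim ` (F - {f})" Q0] less.prems unfolding Q0_def by auto
    define c where "c = c0(q0 := - (\<Sum>q\<in>Q0. c0 q * f q) / f q0)"
    have reduce: "(\<Sum>q\<in>Q. c q * g q) = (\<Sum>q\<in>Q0. c0 q * elim g q)" for g
      unfolding c_def elim_def Q0_def by (rule sum_eliminate_coordinate[where f = f, OF less.prems(1) q0])
    have "(\<Sum>q\<in>Q. c q * g q) = 0" if "g \<in> F" for g
    proof (cases "g = f")
      case True
      then show ?thesis using q0 unfolding reduce elim_def by simp
    next
      case False
      then show ?thesis using c0(2) that unfolding reduce by blast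
    qed
    moreover have "\<exists>q\<in>Q. c q \<noteq> 0" using c0(1) unfolding c_def Q0_def by auto
    ultimately show ?thesis by blast
  qed
qed

lemma exists_balanced_null_direction:
  fixes v :: "'q \<Rightarrow> 'i \<Rightarrow> real"
  assumes "finite Q" "finite I" "card I + 1 < card Q"
  obtains c where "\<exists>q\<in>Q. c q > 0" "sum c Q = 0" "\<forall>i\<in>I. (\<Sum>q\<in>Q. c q * v q i) = 0"
proof -
  define F where "F = insert (\<lambda>_. 1) ((\<lambda>i q. v q i) ` I)"
  have "card F \<le> Suc (card ((\<lambda>i q. v q i) ` I))"
    unfolding F_def by (simp add: card_insert_if assms(2))
  also have "\<dots> \<le> card I + 1" using card_image_le[OF assms(2)] by simp
  finally have "card F \<le> card I + 1" .
  then obtain c where c: "\<exists>q\<in>Q. c q \<noteq> 0" "\<forall>f\<in>F. (\<Sum>q\<in>Q. c q * f q) = 0"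
    using exists_nonzero_annihilator[of Q F] assms unfolding F_def by auto
  have csum: "sum c Q = 0" and cv: "\<forall>i\<in>I. (\<Sum>q\<in>Q. c q * v q i) = 0"
    using c(2) unfolding F_def by auto
  have "\<exists>q\<in>Q. c q > 0"
  proof (rule ccontr)
    assume "\<not> ?thesis"
    then have "\<forall>q\<in>Q. c q = 0"
      using sum_nonneg_eq_0_iff[OF assms(1), of "\<lambda>q. - c q"] csum by (simp add: sum_negf not_less)
    then show False using c(1) by auto
  qed
  then show ?thesis using that csum cv by blast
qed

text \<open>Move the weights along the null direction until the first of them vanishes.\<close>

lemma caratheodory_step:
  fixes v :: "'q \<Rightarrow> 'i \<Rightarrow> real"
  assumes "finite Q" "finite I" "card I + 1 < card Q" "\<forall>q\<in>Q. w q \<ge> 0"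
  obtains q1 u where "q1 \<in> Q" "\<forall>q\<in>Q. u q \<ge> 0" "u q1 = 0" "sum u Q = sum w Q"
    "\<forall>i\<in>I. (\<Sum>q\<in>Q. u q * v q i) = (\<Sum>q\<in>Q. w q * v q i)"
proof -
  obtain c where c: "\<exists>q\<in>Q. c q > 0" "sum c Q = 0" "\<forall>i\<in>I. (\<Sum>q\<in>Q. c q * v q i) = 0"
    using exists_balanced_null_direction[OF assms(1-3)] by blast
  define Pos where "Pos = {q\<in>Q. c q > 0}"
  have "finite Pos" "Pos \<noteq> {}" using assms(1) c(1) unfolding Pos_def by auto
  then obtain q1 where q1: "q1 \<in> Pos" and q1_min: "\<forall>q\<in>Pos. w q1 / c q1 \<le> w q / c q"
    using arg_min_if_finite(1,2)[of Pos "\<lambda>q. w q / c q"] by (metis not_le)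
  define t where "t = w q1 / c q1"
  define u where "u q = w q - t * c q" for q
  have t0: "t \<ge> 0" using q1 assms(4) unfolding t_def Pos_def by auto
  have "u q \<ge> 0" if "q \<in> Q" for q
  proof (cases "c q > 0")
    case True
    then have "t \<le> w q / c q" using q1_min that unfolding t_def Pos_def by auto
    then show ?thesis using True unfolding u_def by (simp add: le_divide_eq)
  next
    case False
    then have "t * c q \<le> 0" using t0 by (simp add: mult_nonneg_nonpos)
    moreover have "w q \<ge> 0" using assms(4) that by blast
    ultimately show ?thesis unfolding u_def by simp
  qed
  moreover have "u q1 = 0" using q1 unfolding u_def t_def Pos_def by auto
  moreover have "sum u Q = sum w Q"
    using c(2) unfolding u_def by (simp add: sum_subtractf sum_distrib_left[symmetric])
  moreover have "(\<Sum>q\<in>Q. u q * v q i) = (\<Sum>q\<in>Q. w q * v q i)" if "i \<in> I" for i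
    using c(3) that unfolding u_def
    by (simp add: left_diff_distrib sum_subtractf mult.assoc sum_distrib_left[symmetric])
  ultimately show ?thesis using that q1 unfolding Pos_def by blast
qed

lemma caratheodory_reduction:
  fixes v :: "'q \<Rightarrow> 'i \<Rightarrow> real"
  assumes "finite Q" "finite I" "\<forall>q\<in>Q. w q \<ge> 0"
  shows "\<exists>Q' u. Q' \<subseteq> Q \<and> card Q' \<le> card I + 1 \<and> (\<forall>q\<in>Q'. u q \<ge> 0) \<and> sum u Q' = sum w Q \<and>
           (\<forall>i\<in>I. (\<Sum>q\<in>Q'. u q * v q i) = (\<Sum>q\<in>Q. w q * v q i))"
  using assms
proof (induction "card Q" arbitrary: Q w rule: less_induct)
  case less
  show ?case
  proof (cases "card Q \<le> card I + 1")
    case True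
    then show ?thesis using less.prems by blast
  next
    case False
    then obtain q1 u where u: "q1 \<in> Q" "\<forall>q\<in>Q. u q \<ge> 0" "u q1 = 0" "sum u Q = sum w Q"
      "\<forall>i\<in>I. (\<Sum>q\<in>Q. u q * v q i) = (\<Sum>q\<in>Q. w q * v q i)"
      using caratheodory_step[OF less.prems(1,2) _ less.prems(3)] by (metis not_le)
    have drop_q1: "(\<Sum>q\<in>Q - {q1}. u q * g q) = (\<Sum>q\<in>Q. u q * g q)" for g
      using sum.remove[OF less.prems(1) u(1), of "\<lambda>q. u q * g q"] u(3) by simp
    have "card (Q - {q1}) < card Q" using less.prems(1) u(1) by (rule card_Diff1_less)
    then obtain Q' u' where "Q' \<subseteq> Q - {q1}" "card Q' \<le> card I + 1" "\<forall>q\<in>Q'. u' q \<ge> 0"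
      "sum u' Q' = sum u (Q - {q1})"
      "\<forall>i\<in>I. (\<Sum>q\<in>Q'. u' q * v q i) = (\<Sum>q\<in>Q - {q1}. u q * v q i)"
      using less.hyps[of "Q - {q1}" u] less.prems u(2) by auto
    then show ?thesis using drop_q1[of "\<lambda>_. 1"] drop_q1 u(4,5) by (intro exI[of _ Q'] exI[of _ u']) auto
  qed
qed

section \<open>Estimates for the exponential function\<close>

lemma power_div_fact_le_exp:
  assumes "(x::real) \<ge> 0"
  shows "x ^ n / fact n \<le> exp x"
proof -
  obtain t where "exp x = (\<Sum>m<Suc n. x ^ m / fact m) + exp t / fact (Suc n) * x ^ Suc n"
    using Maclaurin_exp_le[of x "Suc n"] by blast
  moreover have "x ^ n / fact n \<le> (\<Sum>m<Suc n. x ^ m / fact m)"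
    using assms by (intro member_le_sum) auto
  moreover have "0 \<le> exp t / fact (Suc n) * x ^ Suc n" using assms by simp
  ultimately show ?thesis by linarith
qed

lemma exp_minus_Taylor_remainder:
  assumes "(v::real) \<ge> 0"
  shows "\<bar>exp (- v) - (\<Sum>m\<le>k. (- v) ^ m / fact m)\<bar> \<le> v ^ Suc k / fact (Suc k)"
proof (cases "v = 0")
  case True
  then show ?thesis by (simp add: sum.atMost_shift del: sum.atMost_Suc)
next
  case False
  then have "- v < 0" using assms by simp
  then obtain t where t: "t < 0"
    "exp (- v) = (\<Sum>m<Suc k. exp 0 / fact m * (- v) ^ m) + exp t / fact (Suc k) * (- v) ^ Suc k"
    using Maclaurin_minus[of "- v" "Suc k" "\<lambda>_. exp" exp] by (auto intro: DERIV_exp)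
  have "\<bar>exp t / fact (Suc k) * (- v) ^ Suc k\<bar> = exp t * (v ^ Suc k / fact (Suc k))"
    using assms by (simp add: abs_mult power_abs)
  also have "\<dots> \<le> v ^ Suc k / fact (Suc k)"
    using t(1) assms by (intro mult_left_le_one_le) auto
  finally show ?thesis using t(2) by (simp add: lessThan_Suc_atMost)
qed

lemma power_e_div_3_le:
  assumes "n \<ge> 14"
  shows "2 * (exp 1 / 3) ^ n \<le> exp (- real n / 27)"
proof -
  have "26/27 \<le> exp (- 1/27 :: real)"
    using exp_ge_add_one_self[of "- 1/27 :: real"] by simp
  then have "exp (1/27::real) * (26/27) \<le> 1"
    using mult_left_mono[of "26/27" "exp (- 1/27 :: real)" "exp (1/27)"] by (simp add: exp_minus)
  then have e127: "exp (1/27::real) \<le> 27/26" by simp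
  define b :: real where "b = exp 1 / 3 * exp (1/27)"
  have "b \<le> 272/100/3 * (27/26)"
    unfolding b_def using e_less_272 e127 by (intro mult_mono) auto
  then have b: "0 \<le> b" "b \<le> 306/325" unfolding b_def by simp_all
  have "b ^ n \<le> b ^ 14" using b assms by (intro power_decreasing) auto
  also have "\<dots> \<le> (306/325) ^ 14" using b by (intro power_mono)
  also have "\<dots> \<le> 1/2" by (simp add: power_divide)
  finally have "2 * b ^ n \<le> 1" by simp
  have "exp (1/27) ^ n * exp (- real n / 27) = 1"
    by (simp add: exp_of_nat_mult[symmetric] exp_add[symmetric])
  then have "(exp 1 / 3) ^ n = b ^ n * exp (- real n / 27)"
    unfolding b_def power_mult_distrib by (simp add: mult.assoc)
  also have "\<dots> \<le> exp (- real n / 27) / 2"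
    using \<open>2 * b ^ n \<le> 1\<close> by simp
  finally show ?thesis by simp
qed

lemma Taylor_term_le_gaussian_tail:
  fixes a :: real
  assumes "a \<ge> 1"
  defines "n \<equiv> Suc (nat \<lfloor>27 / 2 * a\<^sup>2\<rfloor>)"
  shows "2 * ((9 * a\<^sup>2 / 2) ^ n / fact n) \<le> exp (- a\<^sup>2 / 2)"
proof -
  define u where "u = 9 * a\<^sup>2 / 2"
  have a2: "a\<^sup>2 \<ge> 1" using assms by (simp add: one_le_power)
  have n: "real n > 27 / 2 * a\<^sup>2" "n \<ge> 14"
    unfolding n_def using a2 floor_correct[of "27 / 2 * a\<^sup>2"] by linarith+
  have "u ^ n / fact n = (u / n) ^ n * (real n ^ n / fact n)"
    using n by (simp add: power_divide)
  also have "\<dots> \<le> (u / n) ^ n * exp n"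
    using n unfolding u_def by (intro mult_left_mono[OF power_div_fact_le_exp]) auto
  also have "\<dots> = (u / n * exp 1) ^ n"
  proof -
    have "exp (real n) = exp 1 ^ n" using exp_of_nat_mult[of n "1::real"] by simp
    then show ?thesis by (simp only: power_mult_distrib)
  qed
  also have "\<dots> \<le> (exp 1 / 3) ^ n"
  proof -
    have "u / n \<le> 1 / 3" using n unfolding u_def by (simp add: divide_le_eq)
    from mult_right_mono[OF this, of "exp 1"] have "u / n * exp 1 \<le> exp 1 / 3" by simp
    then show ?thesis by (rule power_mono) (simp add: u_def)
  qed
  finally have "2 * (u ^ n / fact n) \<le> exp (- real n / 27)"
    using power_e_div_3_le[OF n(2)] by linarith
  also have "\<dots> \<le> exp (- a\<^sup>2 / 2)" using n by simp
  finally show ?thesis unfolding u_def .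
qed

lemma abs_mult_exp_neg_half_sq_le: "\<bar>(z::real) * exp (- z\<^sup>2 / 2)\<bar> \<le> 1"
proof -
  have "\<bar>z\<bar> \<le> 1 + z\<^sup>2 / 2"
    using zero_le_power2[of "\<bar>z\<bar> - 1"] by (simp add: power2_eq_square algebra_simps)
  also have "\<dots> \<le> exp (z\<^sup>2 / 2)" by (rule exp_ge_add_one_self)
  finally have "\<bar>z\<bar> * exp (- z\<^sup>2 / 2) \<le> exp (z\<^sup>2 / 2) * exp (- z\<^sup>2 / 2)"
    by (intro mult_right_mono) auto
  also have "\<dots> = 1" by (simp add: exp_add[symmetric])
  finally show ?thesis by (simp add: abs_mult)
qed

lemma exp_neg_half_sq_lipschitz:
  "\<bar>exp (- t\<^sup>2 / 2) - exp (- s\<^sup>2 / 2)\<bar> \<le> \<bar>t - (s::real)\<bar>"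
proof -
  have *: "\<bar>exp (- t\<^sup>2 / 2) - exp (- s\<^sup>2 / 2)\<bar> \<le> t - s" if st: "s < t" for s t :: real
  proof -
    have "\<And>x. DERIV (\<lambda>z::real. exp (- z\<^sup>2 / 2)) x :> exp (- x\<^sup>2 / 2) * (- x)"
      by (auto intro!: derivative_eq_intros)
    then obtain z where "exp (- t\<^sup>2 / 2) - exp (- s\<^sup>2 / 2) = (t - s) * (exp (- z\<^sup>2 / 2) * (- z))"
      using MVT2[OF st, of "\<lambda>z. exp (- z\<^sup>2 / 2)" "\<lambda>x. exp (- x\<^sup>2 / 2) * (- x)"] by blast
    then have "\<bar>exp (- t\<^sup>2 / 2) - exp (- s\<^sup>2 / 2)\<bar> = (t - s) * \<bar>z * exp (- z\<^sup>2 / 2)\<bar>"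
      using st by (simp add: abs_mult)
    also have "\<dots> \<le> t - s"
      using st abs_mult_exp_neg_half_sq_le[of z] by (intro mult_right_le_one_le) auto
    finally show ?thesis .
  qed
  show ?thesis
    using *[of s t] *[of t s] by (cases s t rule: linorder_cases) (auto simp: abs_minus_commute)
qed

lemma std_normal_density_lipschitz:
  "\<bar>std_normal_density t - std_normal_density s\<bar> \<le> \<bar>t - s\<bar> / sqrt (2 * pi)"
proof -
  have "\<bar>std_normal_density t - std_normal_density s\<bar>
      = \<bar>exp (- t\<^sup>2 / 2) - exp (- s\<^sup>2 / 2)\<bar> / sqrt (2 * pi)"
    by (simp add: std_normal_density_def diff_divide_distrib[symmetric] abs_divide)
  then show ?thesis using exp_neg_half_sq_lipschitz[of t s] by (simp add: divide_right_mono)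
qed

lemma std_normal_density_le_1: "std_normal_density t \<le> 1"
proof -
  have "exp (- t\<^sup>2 / 2) \<le> 1" by simp
  also have "1 \<le> sqrt (2 * pi)" using pi_gt3 by (simp add: real_le_rsqrt)
  finally show ?thesis unfolding std_normal_density_def by simp
qed

section \<open>Gaussian sums with matched moments\<close>

lemma abs_sum_weight_diff_le:
  fixes w u g :: "'q \<Rightarrow> real"
  assumes "finite Q" "\<forall>q\<in>Q. w q \<ge> 0" "\<forall>q\<in>Q. u q \<ge> 0" "sum u Q = sum w Q"
    and "\<forall>q\<in>Q. \<bar>g q - m\<bar> \<le> B"
  shows "\<bar>\<Sum>q\<in>Q. (w q - u q) * g q\<bar> \<le> 2 * sum w Q * B"
proof -
  have "(\<Sum>q\<in>Q. (w q - u q) * m) = (sum w Q - sum u Q) * m"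
    unfolding left_diff_distrib sum_subtractf sum_distrib_right ..
  then have "(\<Sum>q\<in>Q. (w q - u q) * m) = 0" using assms(4) by simp
  then have "(\<Sum>q\<in>Q. (w q - u q) * g q) = (\<Sum>q\<in>Q. (w q - u q) * (g q - m))"
    by (simp add: right_diff_distrib sum_subtractf)
  also have "\<bar>\<dots>\<bar> \<le> (\<Sum>q\<in>Q. \<bar>(w q - u q) * (g q - m)\<bar>)" by (rule sum_abs)
  also have "\<dots> \<le> (\<Sum>q\<in>Q. (w q + u q) * B)"
  proof (rule sum_mono)
    fix q assume "q \<in> Q"
    then have "w q \<ge> 0" "u q \<ge> 0" "\<bar>g q - m\<bar> \<le> B" using assms(2,3,5) by auto
    then have "\<bar>w q - u q\<bar> \<le> w q + u q" "\<bar>g q - m\<bar> \<le> B" by auto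
    then show "\<bar>(w q - u q) * (g q - m)\<bar> \<le> (w q + u q) * B"
      unfolding abs_mult by (intro mult_mono) auto
  qed
  also have "\<dots> = 2 * sum w Q * B"
    using assms(4) by (simp add: sum_distrib_right[symmetric] sum.distrib)
  finally show ?thesis .
qed

definition exp_Taylor :: "nat \<Rightarrow> real \<Rightarrow> real" where
  "exp_Taylor k x = (\<Sum>m\<le>k. x ^ m / fact m)"

lemma polyfun_exp_Taylor_neg_half_sq:
  assumes "polyfun d P"
  shows "polyfun (2 * k * d) (\<lambda>\<beta>. exp_Taylor k (- (P \<beta>)\<^sup>2 / 2))"
  unfolding exp_Taylor_def
proof (intro polyfun_sum)
  fix m assume "m \<in> {..k}"
  have "(\<lambda>\<beta>. - (P \<beta>)\<^sup>2 / 2) = (\<lambda>\<beta>. (- 1/2) * (P \<beta>)\<^sup>2)" by (simp add: fun_eq_iff)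
  then have "polyfun (2 * d) (\<lambda>\<beta>. - (P \<beta>)\<^sup>2 / 2)"
    using polyfun_cmult[OF polyfun_power[OF assms, of 2]] by (simp only:)
  from polyfun_cmult[OF polyfun_power[OF this, of m], of "1 / fact m"]
  have "polyfun (m * (2 * d)) (\<lambda>\<beta>. (- (P \<beta>)\<^sup>2 / 2) ^ m / fact m)" by simp
  then show "polyfun (2 * k * d) (\<lambda>\<beta>. (- (P \<beta>)\<^sup>2 / 2) ^ m / fact m)"
    by (rule polyfun_mono) (use \<open>m \<in> {..k}\<close> in simp)
qed simp

lemma gaussian_sum_far:
  fixes t w u :: "'q \<Rightarrow> real"
  assumes Q: "finite Q" "\<forall>q\<in>Q. w q \<ge> 0" "\<forall>q\<in>Q. u q \<ge> 0" "sum u Q = sum w Q"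
    and far: "\<forall>q\<in>Q. a \<le> \<bar>t q\<bar>" and "a \<ge> 0"
  shows "\<bar>\<Sum>q\<in>Q. (w q - u q) * exp (- (t q)\<^sup>2 / 2)\<bar> \<le> sum w Q * exp (- a\<^sup>2 / 2)"
proof -
  have "\<bar>exp (- (t q)\<^sup>2 / 2) - exp (- a\<^sup>2 / 2) / 2\<bar> \<le> exp (- a\<^sup>2 / 2) / 2" if "q \<in> Q" for q
  proof -
    have "a\<^sup>2 \<le> (t q)\<^sup>2" using far that \<open>a \<ge> 0\<close> abs_le_square_iff[of a "t q"] by auto
    then have "exp (- (t q)\<^sup>2 / 2) \<le> exp (- a\<^sup>2 / 2)" by simp
    moreover have "0 < exp (- (t q)\<^sup>2 / 2)" by simp
    ultimately show ?thesis by (simp only: abs_le_iff) linarith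
  qed
  then have "\<bar>\<Sum>q\<in>Q. (w q - u q) * exp (- (t q)\<^sup>2 / 2)\<bar> \<le> 2 * sum w Q * (exp (- a\<^sup>2 / 2) / 2)"
    by (intro abs_sum_weight_diff_le[OF Q]) blast
  then show ?thesis by simp
qed

lemma gaussian_sum_near:
  fixes P :: "real ^ 'p \<Rightarrow> real" and c :: "'q \<Rightarrow> real ^ 'p"
  assumes Q: "finite Q" "\<forall>q\<in>Q. w q \<ge> 0" "\<forall>q\<in>Q. u q \<ge> 0"
    and P: "polyfun d P" and mom: "same_moments (2 * nat \<lfloor>27 / 2 * a\<^sup>2\<rfloor> * d) Q c w u"
    and near: "\<forall>q\<in>Q. \<bar>P (c q)\<bar> \<le> 3 * a" and "a \<ge> 1"
  shows "\<bar>\<Sum>q\<in>Q. (w q - u q) * exp (- (P (c q))\<^sup>2 / 2)\<bar> \<le> sum w Q * exp (- a\<^sup>2 / 2)"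
proof -
  define k where "k = nat \<lfloor>27 / 2 * a\<^sup>2\<rfloor>"
  define T where "T = (9 * a\<^sup>2 / 2) ^ Suc k / fact (Suc k)"
  define g where "g q = exp (- (P (c q))\<^sup>2 / 2) - exp_Taylor k (- (P (c q))\<^sup>2 / 2)" for q
  have "(\<Sum>q\<in>Q. w q * exp_Taylor k (- (P (c q))\<^sup>2 / 2)) = (\<Sum>q\<in>Q. u q * exp_Taylor k (- (P (c q))\<^sup>2 / 2))"
    using sum_polyfun_eq_if_same_moments[OF polyfun_exp_Taylor_neg_half_sq[OF P] mom[folded k_def]] .
  then have "(\<Sum>q\<in>Q. (w q - u q) * exp (- (P (c q))\<^sup>2 / 2)) = (\<Sum>q\<in>Q. (w q - u q) * g q)"
    unfolding g_def by (simp add: left_diff_distrib right_diff_distrib sum_subtractf)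
  moreover have "\<bar>g q - 0\<bar> \<le> T" if "q \<in> Q" for q
  proof -
    have "(P (c q))\<^sup>2 / 2 \<le> 9 * a\<^sup>2 / 2"
      using near that abs_le_square_iff[of "P (c q)" "3 * a"] \<open>a \<ge> 1\<close> by (simp add: power_mult_distrib)
    then have "((P (c q))\<^sup>2 / 2) ^ Suc k / fact (Suc k) \<le> T"
      unfolding T_def by (intro divide_right_mono power_mono) auto
    then show ?thesis
      using exp_minus_Taylor_remainder[of "(P (c q))\<^sup>2 / 2" k] unfolding g_def exp_Taylor_def by simp
  qed
  ultimately have "\<bar>\<Sum>q\<in>Q. (w q - u q) * exp (- (P (c q))\<^sup>2 / 2)\<bar> \<le> sum w Q * (2 * T)"
    using abs_sum_weight_diff_le[OF Q same_moments_mass[OF mom, symmetric], of g 0 T] by simp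
  also have "\<dots> \<le> sum w Q * exp (- a\<^sup>2 / 2)"
    using Taylor_term_le_gaussian_tail[OF \<open>a \<ge> 1\<close>] Q(2)
    unfolding T_def k_def by (intro mult_left_mono sum_nonneg) auto
  finally show ?thesis .
qed

lemma moment_matched_gaussian_sum:
  fixes P :: "real ^ 'p \<Rightarrow> real" and c :: "'q \<Rightarrow> real ^ 'p"
  assumes Q: "finite Q" "\<forall>q\<in>Q. w q \<ge> 0" "\<forall>q\<in>Q. u q \<ge> 0"
    and P: "polyfun d P" and mom: "same_moments (2 * nat \<lfloor>27 / 2 * a\<^sup>2\<rfloor> * d) Q c w u"
    and spread: "\<forall>q1\<in>Q. \<forall>q2\<in>Q. \<bar>P (c q1) - P (c q2)\<bar> \<le> 2 * a" and "a \<ge> 1"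
  shows "\<bar>\<Sum>q\<in>Q. (w q - u q) * exp (- (P (c q))\<^sup>2 / 2)\<bar> \<le> sum w Q * exp (- a\<^sup>2 / 2)"
proof (cases "\<exists>q0\<in>Q. \<bar>P (c q0)\<bar> < a")
  case True
  \<comment> \<open>then the whole cell is close to the centre of the Gaussian, where Taylor expansion works\<close>
  then have "\<forall>q\<in>Q. \<bar>P (c q)\<bar> \<le> 3 * a" using spread by force
  then show ?thesis using gaussian_sum_near[OF Q P mom] \<open>a \<ge> 1\<close> by blast
next
  case False
  then have "\<forall>q\<in>Q. a \<le> \<bar>P (c q)\<bar>" by (auto simp: not_less)
  then show ?thesis using gaussian_sum_far[OF Q same_moments_mass[OF mom, symmetric]] \<open>a \<ge> 1\<close> by simp
qed

section \<open>Borel partitions of compact sets\<close>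

lemma finite_partition_refining:
  fixes \<A> :: "'a set set"
  assumes "finite \<A>" "\<A> \<subseteq> sets M"
  obtains \<P> where "finite \<P>" "disjoint \<P>" "\<Union>\<P> = \<Union>\<A>" "{} \<notin> \<P>" "\<P> \<subseteq> sets M"
    "\<forall>C\<in>\<P>. \<exists>A\<in>\<A>. C \<subseteq> A"
proof -
  obtain xs where xs: "set xs = \<A>" using finite_list[OF assms(1)] by blast
  define n where "n = length xs"
  define A where "A i = (if i < n then xs ! i else {})" for i
  define \<P> where "\<P> = disjointed A ` {0..<n} - {{}}"
  have "disjoint_family_on (disjointed A) {0..<n}"
    by (rule disjoint_family_on_mono[OF subset_UNIV disjoint_family_disjointed])
  then have "disjoint (disjointed A ` {0..<n})" by (rule disjoint_family_on_disjoint_image)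
  then have "disjoint \<P>" unfolding \<P>_def disjoint_def by blast
  have "\<Union>\<P> = \<Union>\<A>"
  proof -
    have "\<Union>\<P> = (\<Union>i\<in>{0..<n}. disjointed A i)" unfolding \<P>_def by blast
    also have "\<dots> = (\<Union>i\<in>{0..<n}. A i)" by (rule finite_UN_disjointed_eq)
    also have "\<dots> = \<Union>((!) xs ` {0..<length xs})" unfolding A_def n_def by simp
    also have "\<dots> = \<Union>\<A>" by (simp add: nth_image xs)
    finally show ?thesis .
  qed
  have "\<P> \<subseteq> sets M"
  proof -
    have "range A \<subseteq> sets M" using assms(2) xs unfolding A_def n_def by auto
    then have "range (disjointed A) \<subseteq> sets M" by (rule sets.range_disjointed_sets)
    then show ?thesis unfolding \<P>_def by auto
  qed
  have "\<exists>A'\<in>\<A>. C \<subseteq> A'" if C: "C \<in> \<P>" for C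
  proof -
    have "C \<in> disjointed A ` {0..<n}" using C unfolding \<P>_def by blast
    then obtain i where "i < n" "C = disjointed A i" by auto
    then have "C \<subseteq> xs ! i" "xs ! i \<in> \<A>"
      using disjointed_subset[of A i] xs unfolding A_def n_def by auto
    then show ?thesis by blast
  qed
  moreover have "finite \<P>" "{} \<notin> \<P>" unfolding \<P>_def by auto
  ultimately show ?thesis
    using that \<open>disjoint \<P>\<close> \<open>\<Union>\<P> = \<Union>\<A>\<close> \<open>\<P> \<subseteq> sets M\<close> by blast
qed

lemma compact_finite_cover:
  fixes K :: "'a::metric_space set"
  assumes "compact K" "e > 0"
  obtains T where "finite T" "\<forall>t\<in>K. \<exists>s\<in>T. dist s t \<le> e"
proof -
  obtain T where "finite T" "K \<subseteq> (\<Union>s\<in>T. ball s e)"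
    using assms unfolding compact_eq_totally_bounded by blast
  then show ?thesis using that by (force simp: subset_eq)
qed

lemma covering_number_obtain:
  fixes K :: "'a::metric_space set"
  assumes "compact K" "e > 0"
  obtains S where "finite S" "card S = covering_number e K" "\<forall>t\<in>K. \<exists>s\<in>S. dist s t \<le> e"
proof -
  obtain T where "finite T" "\<forall>t\<in>K. \<exists>s\<in>T. dist s t \<le> e"
    using compact_finite_cover[OF assms] .
  then have "\<exists>n S. finite S \<and> card S = n \<and> (\<forall>t\<in>K. \<exists>s\<in>S. dist s t \<le> e)" by blast
  from LeastI_ex[OF this] show ?thesis
    using that unfolding covering_number_def by blast
qed

lemma inj_on_disjoint_member:
  assumes "disjoint \<P>" "\<And>C. C \<in> \<P> \<Longrightarrow> rep C \<in> C"
  shows "inj_on rep \<P>"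
proof (rule inj_onI)
  fix C1 C2 assume C12: "C1 \<in> \<P>" "C2 \<in> \<P>" "rep C1 = rep C2"
  then have "rep C1 \<in> C1 \<inter> C2" using assms(2)[OF C12(1)] assms(2)[OF C12(2)] by simp
  then show "C1 = C2" using assms(1) C12 unfolding disjoint_def by blast
qed

lemma subset_cball_half:
  fixes C :: "'a::metric_space set"
  assumes "C \<subseteq> cball t (\<delta> / 2)" "x \<in> C"
  shows "C \<subseteq> cball x \<delta>"
proof
  fix \<beta> assume "\<beta> \<in> C"
  then have "dist t \<beta> \<le> \<delta> / 2" "dist t x \<le> \<delta> / 2" using assms by auto
  then show "\<beta> \<in> cball x \<delta>" using dist_triangle[of x \<beta> t] by (simp add: dist_commute)
qed

lemma compact_partition_subordinate:
  fixes K :: "'a::metric_space set"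
  assumes "compact K" "finite S" "\<forall>t\<in>K. \<exists>s\<in>S. dist s t \<le> \<epsilon>" "\<delta> > 0"
  obtains \<P> rep centre where "finite \<P>" "disjoint \<P>" "\<Union>\<P> = K" "\<P> \<subseteq> sets borel"
    "inj_on rep \<P>" "\<And>C. C \<in> \<P> \<Longrightarrow> rep C \<in> C" "\<And>C. C \<in> \<P> \<Longrightarrow> centre C \<in> S"
    "\<And>C. C \<in> \<P> \<Longrightarrow> C \<subseteq> cball (centre C) \<epsilon>" "\<And>C. C \<in> \<P> \<Longrightarrow> C \<subseteq> cball (rep C) \<delta>"
proof -
  obtain T where T: "finite T" "\<forall>t\<in>K. \<exists>s\<in>T. dist s t \<le> \<delta> / 2"
    using compact_finite_cover[OF assms(1)] assms(4) by (metis half_gt_zero)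
  define \<A> where "\<A> = {K \<inter> cball s \<epsilon> \<inter> cball t (\<delta> / 2) | s t. s \<in> S \<and> t \<in> T}"
  have "finite \<A>" unfolding \<A>_def using assms(2) T(1) by (simp add: finite_image_set2)
  moreover have "\<A> \<subseteq> sets borel"
    using compact_imp_closed[OF assms(1)] unfolding \<A>_def by (auto intro!: borel_closed)
  ultimately obtain \<P> where \<P>: "finite \<P>" "disjoint \<P>" "\<Union>\<P> = \<Union>\<A>" "{} \<notin> \<P>" "\<P> \<subseteq> sets borel"
    "\<forall>C\<in>\<P>. \<exists>A\<in>\<A>. C \<subseteq> A"
    by (rule finite_partition_refining)
  have "K \<subseteq> \<Union>\<A>"
  proof
    fix \<beta> assume "\<beta> \<in> K"
    then obtain s t where "s \<in> S" "t \<in> T" "\<beta> \<in> K \<inter> cball s \<epsilon> \<inter> cball t (\<delta> / 2)"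
      using assms(3) T(2) by fastforce
    then show "\<beta> \<in> \<Union>\<A>" unfolding \<A>_def by blast
  qed
  then have "\<Union>\<P> = K" unfolding \<P>(3) unfolding \<A>_def by blast
  define rep where "rep C = (SOME \<beta>. \<beta> \<in> C)" for C :: "'a set"
  define centre where "centre C = (SOME s. s \<in> S \<and> C \<subseteq> cball s \<epsilon>)" for C
  have props: "rep C \<in> C \<and> centre C \<in> S \<and> C \<subseteq> cball (centre C) \<epsilon> \<and> C \<subseteq> cball (rep C) \<delta>"
    if C: "C \<in> \<P>" for C
  proof -
    obtain A where "A \<in> \<A>" "C \<subseteq> A" using \<P>(6) C by blast
    then obtain s t where "s \<in> S" "t \<in> T" "C \<subseteq> K \<inter> cball s \<epsilon> \<inter> cball t (\<delta> / 2)"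
      unfolding \<A>_def by blast
    then have st: "s \<in> S" "C \<subseteq> cball s \<epsilon>" "C \<subseteq> cball t (\<delta> / 2)" by auto
    have "C \<noteq> {}" using \<P>(4) C by blast
    then have "rep C \<in> C" unfolding rep_def by (simp add: some_in_eq)
    moreover have "centre C \<in> S \<and> C \<subseteq> cball (centre C) \<epsilon>"
      unfolding centre_def by (rule someI[of _ s]) (use st in blast)
    moreover have "C \<subseteq> cball (rep C) \<delta>" using subset_cball_half[OF st(3) \<open>rep C \<in> C\<close>] .
    ultimately show ?thesis by blast
  qed
  have "inj_on rep \<P>" using inj_on_disjoint_member[OF \<P>(2)] props by blast
  then show ?thesis by (rule that[OF \<P>(1,2) \<open>\<Union>\<P> = K\<close> \<P>(5)]) (use props in auto)
qed

lemma integral_partition_approx: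
  fixes f :: "'a \<Rightarrow> real"
  assumes "prob_space M" "finite \<P>" "disjoint \<P>" "\<P> \<subseteq> sets M" "AE \<beta> in M. \<beta> \<in> \<Union>\<P>"
    and "integrable M f" "\<forall>C\<in>\<P>. \<forall>\<beta>\<in>C. \<bar>f \<beta> - f (rep C)\<bar> \<le> \<delta>"
  shows "\<bar>(\<integral>\<beta>. f \<beta> \<partial>M) - (\<Sum>C\<in>\<P>. measure M C * f (rep C))\<bar> \<le> \<delta>"
proof -
  interpret prob_space M by (rule assms(1))
  define g where "g \<beta> = (\<Sum>C\<in>\<P>. indicator C \<beta> * f (rep C))" for \<beta>
  have int_C: "integrable M (\<lambda>\<beta>. indicator C \<beta> * f (rep C))" if "C \<in> \<P>" for C
    using assms(4) that
    by (intro integrable_mult_left integrable_real_indicator) (auto simp: less_top[symmetric])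
  then have "integrable M g" unfolding g_def by (intro Bochner_Integration.integrable_sum)
  have "(\<integral>\<beta>. g \<beta> \<partial>M) = (\<Sum>C\<in>\<P>. measure M (C \<inter> space M) * f (rep C))"
    unfolding g_def using int_C by (subst Bochner_Integration.integral_sum) auto
  also have "\<dots> = (\<Sum>C\<in>\<P>. measure M C * f (rep C))"
    using assms(4) sets.sets_into_space by (intro sum.cong) (auto simp: Int_absorb2)
  finally have "(\<integral>\<beta>. g \<beta> \<partial>M) = (\<Sum>C\<in>\<P>. measure M C * f (rep C))" .
  moreover have "\<bar>f \<beta> - g \<beta>\<bar> \<le> \<delta>" if \<beta>: "\<beta> \<in> \<Union>\<P>" for \<beta>
  proof -
    obtain C0 where C0: "C0 \<in> \<P>" "\<beta> \<in> C0" using \<beta> by blast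
    have "\<beta> \<notin> C" if "C \<in> \<P>" "C \<noteq> C0" for C
      using assms(3) that C0 unfolding disjoint_def by blast
    then have "\<P> \<inter> {C. \<beta> \<in> C} = {C0}" using C0 by blast
    then have "g \<beta> = f (rep C0)"
      unfolding g_def using assms(2) by (simp add: indicator_def if_distrib sum.If_cases)
    then show ?thesis using assms(7) C0 by simp
  qed
  then have "(\<integral>\<beta>. \<bar>f \<beta> - g \<beta>\<bar> \<partial>M) \<le> (\<integral>\<beta>. \<delta> \<partial>M)"
    using assms(5,6) \<open>integrable M g\<close> by (intro integral_mono_AE) auto
  moreover have "\<bar>(\<integral>\<beta>. f \<beta> - g \<beta> \<partial>M)\<bar> \<le> (\<integral>\<beta>. \<bar>f \<beta> - g \<beta>\<bar> \<partial>M)"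
    by (rule integral_abs_bound)
  ultimately show ?thesis
    using assms(6) \<open>integrable M g\<close> by (simp add: prob_space)
qed

lemma measure_partition_sum:
  assumes "prob_space M" "finite \<P>" "disjoint \<P>" "\<P> \<subseteq> sets M" "AE \<beta> in M. \<beta> \<in> \<Union>\<P>"
  shows "(\<Sum>C\<in>\<P>. measure M C) = 1"
proof -
  interpret prob_space M by (rule assms(1))
  show ?thesis
    using integral_partition_approx[OF assms, where f = "\<lambda>_. 1" and \<delta> = 0] by (simp add: prob_space)
qed

section \<open>Sparse moment-matching distributions\<close>

lemma pmf_with_weights:
  assumes "finite Q" "inj_on p Q" "\<forall>q\<in>Q. u q \<ge> 0" "sum u Q = 1"
  obtains G :: "'a pmf" where "set_pmf G \<subseteq> p ` Q" "\<And>q. q \<in> Q \<Longrightarrow> pmf G (p q) = u q"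
proof -
  define f where "f z = (if z \<in> p ` Q then u (the_inv_into Q p z) else 0)" for z
  have f_p: "f (p q) = u q" if "q \<in> Q" for q
    unfolding f_def using the_inv_into_f_f[OF assms(2) that] that by simp
  have f0: "f z \<ge> 0" for z unfolding f_def using assms(3) the_inv_into_into[OF assms(2)] by auto
  have "(\<integral>\<^sup>+ z. ennreal (f z) \<partial>count_space UNIV) = (\<Sum>z\<in>p ` Q. ennreal (f z))"
    using assms(1) by (intro nn_integral_count_space') (auto simp: f_def)
  also have "\<dots> = ennreal (\<Sum>q\<in>Q. u q)"
    using f0 f_p assms(2) by (simp add: sum.reindex sum_ennreal)
  finally have "(\<integral>\<^sup>+ z. ennreal (f z) \<partial>count_space UNIV) = 1" using assms(4) by simp
  then have "pmf (embed_pmf f) z = f z" "set_pmf (embed_pmf f) = {z. f z \<noteq> 0}" for z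
    using f0 by (simp_all add: pmf_embed_pmf set_embed_pmf)
  moreover have "{z. f z \<noteq> 0} \<subseteq> p ` Q" unfolding f_def by auto
  ultimately show ?thesis using that[of "embed_pmf f"] f_p by auto
qed

lemma integral_pmf_with_weights:
  fixes f :: "'a \<Rightarrow> real"
  assumes "finite Q" "inj_on p Q" "set_pmf G \<subseteq> p ` Q"
  shows "(\<integral>z. f z \<partial>measure_pmf G) = (\<Sum>q\<in>Q. pmf G (p q) * f (p q))"
proof -
  have "(\<integral>z. f z \<partial>measure_pmf G) = (\<Sum>z\<in>p ` Q. f z * pmf G z)"
    using assms by (intro integral_measure_pmf_real) auto
  also have "\<dots> = (\<Sum>q\<in>Q. pmf G (p q) * f (p q))"
    using assms(2) by (simp add: sum.reindex mult.commute)
  finally show ?thesis .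
qed

lemma card_bounded_exponents:
  "card {\<alpha> :: 'p::finite \<Rightarrow> nat. \<forall>i. \<alpha> i \<le> d} = (d + 1) ^ CARD('p)"
  "finite {\<alpha> :: 'p::finite \<Rightarrow> nat. \<forall>i. \<alpha> i \<le> d}"
proof -
  have "{\<alpha> :: 'p \<Rightarrow> nat. \<forall>i. \<alpha> i \<le> d} = PiE UNIV (\<lambda>_. {..d})"
    by (auto simp: PiE_def Pi_def)
  then show "card {\<alpha> :: 'p \<Rightarrow> nat. \<forall>i. \<alpha> i \<le> d} = (d + 1) ^ CARD('p)"
    "finite {\<alpha> :: 'p \<Rightarrow> nat. \<forall>i. \<alpha> i \<le> d}"
    by (simp_all add: card_PiE finite_PiE)
qed

lemma sparse_moment_matching_weights:
  fixes rep :: "'c \<Rightarrow> real ^ 'p" and centre :: "'c \<Rightarrow> 's"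
  assumes fin: "finite \<P>" "finite S" and centre: "centre ` \<P> \<subseteq> S" and w: "\<forall>C\<in>\<P>. w C \<ge> 0"
  obtains u where "\<forall>C\<in>\<P>. u C \<ge> 0" "sum u \<P> = sum w \<P>"
    "card {C\<in>\<P>. u C \<noteq> 0} \<le> (d + 1) ^ CARD('p) * card S + 1"
    "\<And>s. same_moments d {C\<in>\<P>. centre C = s} rep w u"
proof -
  define Box where "Box = {\<alpha> :: 'p \<Rightarrow> nat. \<forall>i. \<alpha> i \<le> d}"
  define v where "v C = (\<lambda>(s, \<alpha>). if centre C = s then monomial \<alpha> (rep C) else 0)" for C
  have "finite (S \<times> Box)" unfolding Box_def using fin(2) card_bounded_exponents(2) by blast
  then obtain \<P>' u where \<P>': "\<P>' \<subseteq> \<P>" "card \<P>' \<le> card (S \<times> Box) + 1" "\<forall>C\<in>\<P>'. u C \<ge> 0"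
    "sum u \<P>' = sum w \<P>" "\<forall>i\<in>S \<times> Box. (\<Sum>C\<in>\<P>'. u C * v C i) = (\<Sum>C\<in>\<P>. w C * v C i)"
    using caratheodory_reduction[OF fin(1) _ w, of "S \<times> Box" v] by auto
  define u' where "u' C = (if C \<in> \<P>' then u C else 0)" for C
  have restrict: "(\<Sum>C\<in>\<P>. u' C * f C) = (\<Sum>C\<in>\<P>'. u C * f C)" for f :: "'c \<Rightarrow> real"
    unfolding u'_def using \<P>'(1) fin(1) by (subst sum.mono_neutral_right[of \<P> \<P>']) auto
  with \<P>'(5) have u'_moments: "\<forall>i\<in>S \<times> Box. (\<Sum>C\<in>\<P>. u' C * v C i) = (\<Sum>C\<in>\<P>. w C * v C i)"
    by simp
  have group: "(\<Sum>C\<in>\<P>. f C * v C (s, \<alpha>)) = (\<Sum>C\<in>{C\<in>\<P>. centre C = s}. f C * monomial \<alpha> (rep C))"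
    for f :: "'c \<Rightarrow> real" and s \<alpha>
    unfolding v_def using fin(1) by (simp add: sum.inter_filter if_distrib cong: if_cong)
  have "same_moments d {C\<in>\<P>. centre C = s} rep w u'" for s
  proof (cases "s \<in> S")
    case True
    show ?thesis unfolding same_moments_def
    proof (intro allI impI)
      fix \<alpha> :: "'p \<Rightarrow> nat" assume "sum \<alpha> UNIV \<le> d"
      then have "\<alpha> i \<le> d" for i using member_le_sum[of i UNIV \<alpha>] by simp
      then have "(s, \<alpha>) \<in> S \<times> Box" using True unfolding Box_def by simp
      then show "(\<Sum>C\<in>{C\<in>\<P>. centre C = s}. w C * monomial \<alpha> (rep C))
          = (\<Sum>C\<in>{C\<in>\<P>. centre C = s}. u' C * monomial \<alpha> (rep C))"
        unfolding group[symmetric] using u'_moments by simp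
    qed
  next
    case False
    then have empty: "{C\<in>\<P>. centre C = s} = {}" using centre by auto
    show ?thesis unfolding same_moments_def empty by simp
  qed
  moreover have "card {C\<in>\<P>. u' C \<noteq> 0} \<le> (d + 1) ^ CARD('p) * card S + 1"
  proof -
    have "card {C\<in>\<P>. u' C \<noteq> 0} \<le> card \<P>'"
      unfolding u'_def using finite_subset[OF \<P>'(1) fin(1)] by (intro card_mono) auto
    also have "\<dots> \<le> card (S \<times> Box) + 1" by (rule \<P>'(2))
    finally show ?thesis unfolding Box_def card_cartesian_product card_bounded_exponents(1)
      by (simp add: mult.commute)
  qed
  moreover have "\<forall>C\<in>\<P>. u' C \<ge> 0" unfolding u'_def using \<P>'(3) by simp
  moreover have "sum u' \<P> = sum w \<P>" using restrict[of "\<lambda>_. 1"] \<P>'(4) by simp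
  ultimately show ?thesis using that by blast
qed

lemma sparse_moment_matching_pmf:
  fixes rep :: "'c \<Rightarrow> real ^ 'p" and centre :: "'c \<Rightarrow> 's"
  assumes fin: "finite \<P>" "finite S" and inj: "inj_on rep \<P>" and centre: "centre ` \<P> \<subseteq> S"
    and w: "\<forall>C\<in>\<P>. w C \<ge> 0" "sum w \<P> = 1"
  obtains G' :: "(real ^ 'p) pmf" where "set_pmf G' \<subseteq> rep ` \<P>"
    "card (set_pmf G') \<le> (d + 1) ^ CARD('p) * card S + 1"
    "\<And>s. same_moments d {C\<in>\<P>. centre C = s} rep w (\<lambda>C. pmf G' (rep C))"
proof -
  obtain u where u: "\<forall>C\<in>\<P>. u C \<ge> 0" "sum u \<P> = sum w \<P>"
    "card {C\<in>\<P>. u C \<noteq> 0} \<le> (d + 1) ^ CARD('p) * card S + 1"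
    "\<And>s. same_moments d {C\<in>\<P>. centre C = s} rep w u"
    using sparse_moment_matching_weights[OF fin centre w(1), where d = d] by blast
  define Q where "Q = {C\<in>\<P>. u C \<noteq> 0}"
  have Q: "finite Q" "Q \<subseteq> \<P>" unfolding Q_def using fin(1) by auto
  have "sum u Q = sum u \<P>" unfolding Q_def using fin(1) by (intro sum.mono_neutral_left) auto
  also have "\<dots> = 1" using u(2) w(2) by simp
  finally obtain G' where G': "set_pmf G' \<subseteq> rep ` Q" "\<And>C. C \<in> Q \<Longrightarrow> pmf G' (rep C) = u C"
    using pmf_with_weights[OF Q(1) inj_on_subset[OF inj Q(2)]] u(1) Q(2) by blast
  have "pmf G' (rep C) = u C" if "C \<in> \<P>" for C
  proof (cases "C \<in> Q")
    case False
    then have "rep C \<notin> rep ` Q" using that inj Q(2) by (auto simp: inj_on_eq_iff)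
    then show ?thesis using G'(1) False that unfolding Q_def by (auto simp: set_pmf_iff)
  qed (use G'(2) in blast)
  then have "same_moments d {C\<in>\<P>. centre C = s} rep w (\<lambda>C. pmf G' (rep C))" for s
    using u(4)[of s] unfolding same_moments_def by simp
  moreover have "card (set_pmf G') \<le> (d + 1) ^ CARD('p) * card S + 1"
    using card_mono[OF finite_imageI[OF Q(1)] G'(1)] card_image_le[OF Q(1), of rep] u(3)
    unfolding Q_def by linarith
  ultimately show ?thesis using that G'(1) Q(2) by blast
qed

section \<open>Gaussian mixtures\<close>

definition gauss_kernel :: "real \<Rightarrow> real \<Rightarrow> real \<Rightarrow> real" where
  "gauss_kernel \<sigma> m y = (1 / \<sigma>) * std_normal_density ((y - m) / \<sigma>)"

lemma mix_density_gauss_kernel: "mix_density r \<sigma> G x y = (\<integral>\<beta>. gauss_kernel \<sigma> (r x \<beta>) y \<partial>G)"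
  unfolding mix_density_def gauss_kernel_def ..

lemma gauss_kernel_exp: "gauss_kernel \<sigma> m y = exp (- ((y - m) / \<sigma>)\<^sup>2 / 2) / (sqrt (2 * pi) * \<sigma>)"
  unfolding gauss_kernel_def std_normal_density_def by simp

lemma abs_gauss_kernel_le: "\<sigma> > 0 \<Longrightarrow> \<bar>gauss_kernel \<sigma> m y\<bar> \<le> 1 / \<sigma>"
  unfolding gauss_kernel_def using std_normal_density_le_1 by (simp add: abs_mult divide_le_cancel)

lemma gauss_kernel_lipschitz:
  assumes "\<sigma> > 0"
  shows "\<bar>gauss_kernel \<sigma> m y - gauss_kernel \<sigma> m' y\<bar> \<le> \<bar>m - m'\<bar> / (\<sigma>\<^sup>2 * sqrt (2 * pi))"
proof -
  have "\<bar>gauss_kernel \<sigma> m y - gauss_kernel \<sigma> m' y\<bar>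
      = \<bar>std_normal_density ((y - m) / \<sigma>) - std_normal_density ((y - m') / \<sigma>)\<bar> / \<sigma>"
    unfolding gauss_kernel_def using assms by (simp add: diff_divide_distrib[symmetric] abs_divide)
  also have "\<dots> \<le> \<bar>(y - m) / \<sigma> - (y - m') / \<sigma>\<bar> / sqrt (2 * pi) / \<sigma>"
    using std_normal_density_lipschitz assms by (intro divide_right_mono) auto
  also have "\<dots> = \<bar>m - m'\<bar> / (\<sigma>\<^sup>2 * sqrt (2 * pi))"
    using assms by (simp add: diff_divide_distrib[symmetric] abs_divide abs_minus_commute power2_eq_square)
  finally show ?thesis .
qed

lemma mixture_partition_error:
  fixes m :: "'a::topological_space \<Rightarrow> real"
  assumes "prob_space G" "sets G = sets borel" "AE \<beta> in G. \<beta> \<in> \<Union>\<P>"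
    and "finite \<P>" "disjoint \<P>" "\<P> \<subseteq> sets borel" "continuous_on UNIV m" "\<forall>C\<in>\<P>. \<forall>\<beta>\<in>C. \<bar>m \<beta> - m (rep C)\<bar> \<le> \<rho>"
    and "\<sigma> > 0"
  shows "\<bar>(\<integral>\<beta>. gauss_kernel \<sigma> (m \<beta>) y \<partial>G) - (\<Sum>C\<in>\<P>. measure G C * gauss_kernel \<sigma> (m (rep C)) y)\<bar>
           \<le> \<rho> / (\<sigma>\<^sup>2 * sqrt (2 * pi))"
proof (rule integral_partition_approx)
  have "continuous_on UNIV (\<lambda>t. gauss_kernel \<sigma> t y)"
    unfolding gauss_kernel_def std_normal_density_def using assms(9) by (intro continuous_intros) auto
  from continuous_on_compose[OF assms(7) continuous_on_subset[OF this subset_UNIV]]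
  have "continuous_on UNIV (\<lambda>\<beta>. gauss_kernel \<sigma> (m \<beta>) y)" by (simp add: o_def)
  then have "(\<lambda>\<beta>. gauss_kernel \<sigma> (m \<beta>) y) \<in> borel_measurable G"
    using measurable_cong_sets[OF assms(2) refl] borel_measurable_continuous_onI by blast
  moreover have "\<bar>gauss_kernel \<sigma> (m \<beta>) y\<bar> \<le> 1 / \<sigma>" for \<beta>
    using abs_gauss_kernel_le[OF assms(9)] .
  ultimately show "integrable G (\<lambda>\<beta>. gauss_kernel \<sigma> (m \<beta>) y)"
    by (intro finite_measure.integrable_const_bound[OF prob_space.finite_measure[OF assms(1)]]) auto
  show "\<forall>C\<in>\<P>. \<forall>\<beta>\<in>C. \<bar>gauss_kernel \<sigma> (m \<beta>) y - gauss_kernel \<sigma> (m (rep C)) y\<bar> \<le> \<rho> / (\<sigma>\<^sup>2 * sqrt (2 * pi))"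
    using assms(8,9) by (auto intro!: order.trans[OF gauss_kernel_lipschitz] divide_right_mono)
qed (use assms(1-6) in auto)

lemma moment_matched_mixture_diff:
  fixes rep :: "'c \<Rightarrow> real ^ 'p" and centre :: "'c \<Rightarrow> 's" and R :: "real ^ 'p \<Rightarrow> real"
  assumes fin: "finite \<P>" and w: "\<forall>C\<in>\<P>. w C \<ge> 0" and u: "\<forall>C\<in>\<P>. u C \<ge> 0"
    and R: "polyfun d R" and "\<sigma> > 0" "a \<ge> 1"
    and mom: "\<And>s. same_moments (2 * nat \<lfloor>27 / 2 * a\<^sup>2\<rfloor> * d) {C\<in>\<P>. centre C = s} rep w u"
    and spread: "\<forall>C1\<in>\<P>. \<forall>C2\<in>\<P>. centre C1 = centre C2 \<longrightarrow> \<bar>R (rep C1) - R (rep C2)\<bar> \<le> 2 * a * \<sigma>"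
  shows "\<bar>\<Sum>C\<in>\<P>. (w C - u C) * gauss_kernel \<sigma> (R (rep C)) y\<bar>
           \<le> sum w \<P> * (exp (- a\<^sup>2 / 2) / (sqrt (2 * pi) * \<sigma>))"
proof -
  define P where "P \<beta> = (y - R \<beta>) / \<sigma>" for \<beta>
  define c where "c = exp (- a\<^sup>2 / 2) / (sqrt (2 * pi) * \<sigma>)"
  define \<Q> where "\<Q> s = {C\<in>\<P>. centre C = s}" for s
  have "polyfun d P" unfolding P_def using R by (rule polyfun_standardize)
  have cell: "\<bar>\<Sum>C\<in>\<Q> s. (w C - u C) * gauss_kernel \<sigma> (R (rep C)) y\<bar> \<le> sum w (\<Q> s) * c" for s
  proof -
    have "\<forall>C1\<in>\<Q> s. \<forall>C2\<in>\<Q> s. \<bar>P (rep C1) - P (rep C2)\<bar> \<le> 2 * a"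
      using spread \<open>\<sigma> > 0\<close> unfolding \<Q>_def P_def
      by (auto simp: diff_divide_distrib[symmetric] abs_divide abs_minus_commute divide_le_eq)
    then have "\<bar>\<Sum>C\<in>\<Q> s. (w C - u C) * exp (- (P (rep C))\<^sup>2 / 2)\<bar> \<le> sum w (\<Q> s) * exp (- a\<^sup>2 / 2)"
      using moment_matched_gaussian_sum[OF _ _ _ \<open>polyfun d P\<close> mom[of s, folded \<Q>_def]] fin w u \<open>a \<ge> 1\<close>
      unfolding \<Q>_def by auto
    moreover have "gauss_kernel \<sigma> (R (rep C)) y = exp (- (P (rep C))\<^sup>2 / 2) / (sqrt (2 * pi) * \<sigma>)" for C
      unfolding gauss_kernel_exp P_def ..
    ultimately show ?thesis
      using \<open>\<sigma> > 0\<close> unfolding c_def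
      by (simp add: sum_divide_distrib[symmetric] abs_divide divide_right_mono)
  qed
  have "(\<Sum>C\<in>\<P>. (w C - u C) * gauss_kernel \<sigma> (R (rep C)) y)
      = (\<Sum>s\<in>centre ` \<P>. \<Sum>C\<in>\<Q> s. (w C - u C) * gauss_kernel \<sigma> (R (rep C)) y)"
    unfolding \<Q>_def using fin by (intro sum.group[symmetric]) auto
  also have "\<bar>\<dots>\<bar> \<le> (\<Sum>s\<in>centre ` \<P>. sum w (\<Q> s) * c)"
    by (rule order.trans[OF sum_abs sum_mono[OF cell]])
  also have "\<dots> = (\<Sum>s\<in>centre ` \<P>. sum w (\<Q> s)) * c" by (rule sum_distrib_right[symmetric])
  also have "(\<Sum>s\<in>centre ` \<P>. sum w (\<Q> s)) = sum w \<P>"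
    unfolding \<Q>_def using fin by (intro sum.group) auto
  finally show ?thesis unfolding c_def .
qed

lemma lipS_lipschitz:
  assumes "lipS r K S0 = ereal L" "x \<in> S0" "b1 \<in> K" "b2 \<in> K"
  shows "\<bar>r x b1 - r x b2\<bar> \<le> L * dist b1 b2"
proof (cases "b1 = b2")
  case False
  have "ereal (\<bar>r x b1 - r x b2\<bar> / norm (b1 - b2)) \<le> lipK r K x"
    unfolding lipK_def using assms(3,4) False by (intro SUP_upper2[of "(b1, b2)"]) auto
  also have "\<dots> \<le> lipS r K S0" unfolding lipS_def using assms(2) by (rule SUP_upper)
  finally have "\<bar>r x b1 - r x b2\<bar> / dist b1 b2 \<le> L" using assms(1) by (simp add: dist_norm)
  then show ?thesis using False by (simp add: divide_le_eq mult.commute)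
qed simp

lemma lipschitz_cell_oscillation:
  fixes m :: "'a::metric_space \<Rightarrow> real"
  assumes lip: "\<And>b1 b2. b1 \<in> \<Union>\<P> \<Longrightarrow> b2 \<in> \<Union>\<P> \<Longrightarrow> \<bar>m b1 - m b2\<bar> \<le> L * dist b1 b2"
    and "L \<ge> 0" and rep: "\<And>C. C \<in> \<P> \<Longrightarrow> rep C \<in> C"
    and centre: "\<And>C. C \<in> \<P> \<Longrightarrow> C \<subseteq> cball (centre C) \<epsilon>"
    and small: "\<And>C. C \<in> \<P> \<Longrightarrow> C \<subseteq> cball (rep C) \<delta>"
  shows "\<forall>C\<in>\<P>. \<forall>\<beta>\<in>C. \<bar>m \<beta> - m (rep C)\<bar> \<le> L * \<delta>"
    and "\<forall>C1\<in>\<P>. \<forall>C2\<in>\<P>. centre C1 = centre C2 \<longrightarrow> \<bar>m (rep C1) - m (rep C2)\<bar> \<le> L * (2 * \<epsilon>)"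
proof -
  show "\<forall>C\<in>\<P>. \<forall>\<beta>\<in>C. \<bar>m \<beta> - m (rep C)\<bar> \<le> L * \<delta>"
  proof (intro ballI)
    fix C \<beta> assume C: "C \<in> \<P>" "\<beta> \<in> C"
    then have "dist \<beta> (rep C) \<le> \<delta>" using small by (fastforce simp: dist_commute)
    then show "\<bar>m \<beta> - m (rep C)\<bar> \<le> L * \<delta>"
      using lip[of \<beta> "rep C"] rep[OF C(1)] C \<open>L \<ge> 0\<close> by (meson UnionI mult_left_mono order.trans)
  qed
  show "\<forall>C1\<in>\<P>. \<forall>C2\<in>\<P>. centre C1 = centre C2 \<longrightarrow> \<bar>m (rep C1) - m (rep C2)\<bar> \<le> L * (2 * \<epsilon>)"
  proof (intro ballI impI)
    fix C1 C2 assume C12: "C1 \<in> \<P>" "C2 \<in> \<P>" "centre C1 = centre C2"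
    then have "dist (centre C1) (rep C1) \<le> \<epsilon>" "dist (centre C1) (rep C2) \<le> \<epsilon>"
      using centre rep by fastforce+
    then have "dist (rep C1) (rep C2) \<le> 2 * \<epsilon>"
      using dist_triangle[of "rep C1" "rep C2" "centre C1"] by (simp add: dist_commute)
    then show "\<bar>m (rep C1) - m (rep C2)\<bar> \<le> L * (2 * \<epsilon>)"
      using lip[of "rep C1" "rep C2"] rep[OF C12(1)] rep[OF C12(2)] C12 \<open>L \<ge> 0\<close>
      by (meson UnionI mult_left_mono order.trans)
  qed
qed

lemma moment_matched_discretization:
  fixes K :: "(real ^ 'p) set"
  assumes K: "compact K" "finite S" "\<forall>t\<in>K. \<exists>s\<in>S. dist s t \<le> \<epsilon>" "\<delta> > 0"
    and G: "prob_space G" "sets G = sets borel" "measure G K = 1"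
  obtains \<P> rep centre and G' :: "(real ^ 'p) pmf"
  where "finite \<P>" "disjoint \<P>" "\<Union>\<P> = K" "\<P> \<subseteq> sets borel" "inj_on rep \<P>"
    "\<And>C. C \<in> \<P> \<Longrightarrow> rep C \<in> C" "\<And>C. C \<in> \<P> \<Longrightarrow> C \<subseteq> cball (centre C) \<epsilon>"
    "\<And>C. C \<in> \<P> \<Longrightarrow> C \<subseteq> cball (rep C) \<delta>"
    "set_pmf G' \<subseteq> rep ` \<P>" "card (set_pmf G') \<le> (d + 1) ^ CARD('p) * card S + 1"
    "\<And>s. same_moments d {C\<in>\<P>. centre C = s} rep (measure G) (\<lambda>C. pmf G' (rep C))"
proof -
  obtain \<P> rep centre where \<P>: "finite \<P>" "disjoint \<P>" "\<Union>\<P> = K" "\<P> \<subseteq> sets borel"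
    "inj_on rep \<P>" "\<And>C. C \<in> \<P> \<Longrightarrow> rep C \<in> C" "\<And>C. C \<in> \<P> \<Longrightarrow> centre C \<in> S"
    "\<And>C. C \<in> \<P> \<Longrightarrow> C \<subseteq> cball (centre C) \<epsilon>" "\<And>C. C \<in> \<P> \<Longrightarrow> C \<subseteq> cball (rep C) \<delta>"
    using compact_partition_subordinate[OF K] by metis
  have "AE \<beta> in G. \<beta> \<in> \<Union>\<P>" using prob_space.AE_prob_1[OF G(1,3)] \<P>(3) by simp
  then have wsum: "sum (measure G) \<P> = 1"
    by (rule measure_partition_sum[OF G(1) \<P>(1,2) \<P>(4)[folded G(2)]])
  have centre: "centre ` \<P> \<subseteq> S" and w: "\<forall>C\<in>\<P>. measure G C \<ge> 0" using \<P>(7) by auto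
  obtain G' where G': "set_pmf G' \<subseteq> rep ` \<P>" "card (set_pmf G') \<le> (d + 1) ^ CARD('p) * card S + 1"
    "\<And>s. same_moments d {C\<in>\<P>. centre C = s} rep (measure G) (\<lambda>C. pmf G' (rep C))"
    using sparse_moment_matching_pmf[OF \<P>(1) K(2) \<P>(5) centre w wsum, where d = d] by blast
  show ?thesis by (rule that[OF \<P>(1-6) \<P>(8,9) G'])
qed

lemma mixture_approximation:
  fixes m :: "real ^ 'p \<Rightarrow> real" and rep :: "(real ^ 'p) set \<Rightarrow> real ^ 'p"
  assumes G: "prob_space G" "sets G = sets borel" "measure G (\<Union>\<P>) = 1"
    and \<P>: "finite \<P>" "disjoint \<P>" "\<P> \<subseteq> sets borel" "inj_on rep \<P>"
    and G': "set_pmf G' \<subseteq> rep ` \<P>"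
      "\<And>s. same_moments (2 * nat \<lfloor>27 / 2 * a\<^sup>2\<rfloor> * d) {C\<in>\<P>. centre C = s} rep
              (measure G) (\<lambda>C. pmf G' (rep C))"
    and m: "polyfun d m" "\<forall>C\<in>\<P>. \<forall>\<beta>\<in>C. \<bar>m \<beta> - m (rep C)\<bar> \<le> \<rho>"
      "\<forall>C1\<in>\<P>. \<forall>C2\<in>\<P>. centre C1 = centre C2 \<longrightarrow> \<bar>m (rep C1) - m (rep C2)\<bar> \<le> 2 * a * \<sigma>"
    and "\<sigma> > 0" "a \<ge> 1"
  shows "\<bar>(\<integral>\<beta>. gauss_kernel \<sigma> (m \<beta>) y \<partial>G) - (\<integral>\<beta>. gauss_kernel \<sigma> (m \<beta>) y \<partial>measure_pmf G')\<bar>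
           \<le> \<rho> / (\<sigma>\<^sup>2 * sqrt (2 * pi)) + exp (- a\<^sup>2 / 2) / (sqrt (2 * pi) * \<sigma>)"
proof -
  let ?k = "\<lambda>\<beta>. gauss_kernel \<sigma> (m \<beta>) y"
  have AE: "AE \<beta> in G. \<beta> \<in> \<Union>\<P>" using prob_space.AE_prob_1[OF G(1,3)] .
  have e1: "\<bar>(\<integral>\<beta>. ?k \<beta> \<partial>G) - (\<Sum>C\<in>\<P>. measure G C * ?k (rep C))\<bar> \<le> \<rho> / (\<sigma>\<^sup>2 * sqrt (2 * pi))"
    using mixture_partition_error[OF G(1,2) AE \<P>(1-3) continuous_on_polyfun[OF m(1)] m(2) \<open>\<sigma> > 0\<close>] .
  have "\<bar>\<Sum>C\<in>\<P>. (measure G C - pmf G' (rep C)) * ?k (rep C)\<bar>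
      \<le> sum (measure G) \<P> * (exp (- a\<^sup>2 / 2) / (sqrt (2 * pi) * \<sigma>))"
    using moment_matched_mixture_diff[OF \<P>(1) _ _ m(1) \<open>\<sigma> > 0\<close> \<open>a \<ge> 1\<close> G'(2) m(3)] by simp
  moreover have "sum (measure G) \<P> = 1"
    using measure_partition_sum[OF G(1) \<P>(1,2) \<P>(3)[folded G(2)] AE] .
  ultimately have e2: "\<bar>\<Sum>C\<in>\<P>. (measure G C - pmf G' (rep C)) * ?k (rep C)\<bar>
      \<le> exp (- a\<^sup>2 / 2) / (sqrt (2 * pi) * \<sigma>)" by simp
  have "(\<integral>\<beta>. ?k \<beta> \<partial>measure_pmf G') = (\<Sum>C\<in>\<P>. pmf G' (rep C) * ?k (rep C))"
    by (rule integral_pmf_with_weights[OF \<P>(1,4) G'(1)])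
  then have "(\<integral>\<beta>. ?k \<beta> \<partial>G) - (\<integral>\<beta>. ?k \<beta> \<partial>measure_pmf G')
      = ((\<integral>\<beta>. ?k \<beta> \<partial>G) - (\<Sum>C\<in>\<P>. measure G C * ?k (rep C)))
        + (\<Sum>C\<in>\<P>. (measure G C - pmf G' (rep C)) * ?k (rep C))"
    by (simp add: left_diff_distrib sum_subtractf)
  then show ?thesis using e1 e2 by linarith
qed

lemma gaussian_mixture_compression:
  fixes K :: "(real ^ 'p) set" and m :: "'x \<Rightarrow> real ^ 'p \<Rightarrow> real"
  assumes K: "compact K" "finite S" "\<forall>t\<in>K. \<exists>s\<in>S. dist s t \<le> \<epsilon>" "\<delta> > 0"
    and G: "prob_space G" "sets G = sets borel" "measure G K = 1"
    and m: "\<And>x. x \<in> X \<Longrightarrow> polyfun d (m x)"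
      "\<And>x b1 b2. x \<in> X \<Longrightarrow> b1 \<in> K \<Longrightarrow> b2 \<in> K \<Longrightarrow> \<bar>m x b1 - m x b2\<bar> \<le> L * dist b1 b2"
    and "L \<ge> 0" "L * \<epsilon> = a * \<sigma>" "\<sigma> > 0" "a \<ge> 1"
  obtains G' :: "(real ^ 'p) pmf" where "finite (set_pmf G')" "set_pmf G' \<subseteq> K"
    "card (set_pmf G') \<le> (2 * nat \<lfloor>27 / 2 * a\<^sup>2\<rfloor> * d + 1) ^ CARD('p) * card S + 1"
    "\<And>x y. x \<in> X \<Longrightarrow>
       \<bar>(\<integral>\<beta>. gauss_kernel \<sigma> (m x \<beta>) y \<partial>G) - (\<integral>\<beta>. gauss_kernel \<sigma> (m x \<beta>) y \<partial>measure_pmf G')\<bar>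
         \<le> L * \<delta> / (\<sigma>\<^sup>2 * sqrt (2 * pi)) + exp (- a\<^sup>2 / 2) / (sqrt (2 * pi) * \<sigma>)"
proof -
  obtain \<P> rep centre and G' :: "(real ^ 'p) pmf"
    where \<P>: "finite \<P>" "disjoint \<P>" "\<Union>\<P> = K" "\<P> \<subseteq> sets borel" "inj_on rep \<P>"
      "\<And>C. C \<in> \<P> \<Longrightarrow> rep C \<in> C" "\<And>C. C \<in> \<P> \<Longrightarrow> C \<subseteq> cball (centre C) \<epsilon>"
      "\<And>C. C \<in> \<P> \<Longrightarrow> C \<subseteq> cball (rep C) \<delta>"
    and G': "set_pmf G' \<subseteq> rep ` \<P>"
      "card (set_pmf G') \<le> (2 * nat \<lfloor>27 / 2 * a\<^sup>2\<rfloor> * d + 1) ^ CARD('p) * card S + 1"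
      "\<And>s. same_moments (2 * nat \<lfloor>27 / 2 * a\<^sup>2\<rfloor> * d) {C\<in>\<P>. centre C = s} rep
              (measure G) (\<lambda>C. pmf G' (rep C))"
    by (rule moment_matched_discretization[OF K G]) blast
  have "\<bar>(\<integral>\<beta>. gauss_kernel \<sigma> (m x \<beta>) y \<partial>G) - (\<integral>\<beta>. gauss_kernel \<sigma> (m x \<beta>) y \<partial>measure_pmf G')\<bar>
      \<le> L * \<delta> / (\<sigma>\<^sup>2 * sqrt (2 * pi)) + exp (- a\<^sup>2 / 2) / (sqrt (2 * pi) * \<sigma>)" if "x \<in> X" for x y
  proof -
    have lip: "\<bar>m x b1 - m x b2\<bar> \<le> L * dist b1 b2" if "b1 \<in> \<Union>\<P>" "b2 \<in> \<Union>\<P>" for b1 b2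
      using m(2)[OF \<open>x \<in> X\<close>] that \<P>(3) by blast
    have "L * (2 * \<epsilon>) = 2 * a * \<sigma>" using \<open>L * \<epsilon> = a * \<sigma>\<close> by simp
    note osc = lipschitz_cell_oscillation[of \<P> "m x" L, OF lip \<open>L \<ge> 0\<close> \<P>(6-8), unfolded this]
    show ?thesis
      using m(1)[OF \<open>x \<in> X\<close>] osc G(3) \<P>(3) \<open>\<sigma> > 0\<close> \<open>a \<ge> 1\<close>
      by (intro mixture_approximation[OF G(1,2) _ \<P>(1,2,4,5) G'(1,3)]) auto
  qed
  moreover have "finite (set_pmf G')" using finite_subset[OF G'(1) finite_imageI[OF \<P>(1)]] .
  moreover have "set_pmf G' \<subseteq> K" using G'(1) \<P>(3,6) by blast
  ultimately show ?thesis using that G'(2) by blast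
qed

theorem lemma6p5:
  fixes K :: "(real ^ 'p) set" and S0 :: "'x set" and \<sigma> :: real
    and r :: "'x \<Rightarrow> real ^ 'p \<Rightarrow> real" and \<zeta> :: nat
    and G :: "(real ^ 'p) measure" and a :: real
  assumes "compact K"
    and "\<sigma> > 0"
    and "\<zeta> \<ge> 1"
    and "\<forall>x. poly_deg_le \<zeta> (r x)"
    and "0 < lipS r K S0" and "lipS r K S0 < \<infinity>"
    and "prob_space G" and "sets G = sets borel" and "measure G K = 1"
    and "a \<ge> 1"
  shows "\<exists>G' :: (real ^ 'p) pmf.
           finite (set_pmf G') \<and> set_pmf G' \<subseteq> K \<and>
           card (set_pmf G') \<le>
             (2 * nat \<lfloor>27 / 2 * a\<^sup>2\<rfloor> * \<zeta> + 1) ^ CARD('p)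
               * covering_number (a * \<sigma> / real_of_ereal (lipS r K S0)) K + 1 \<and>
           (\<forall>x\<in>S0. \<forall>y::real.
              \<bar>mix_density r \<sigma> G x y - mix_density r \<sigma> (measure_pmf G') x y\<bar>
                \<le> (1 + 1 / sqrt (2 * pi)) * exp (- a\<^sup>2 / 2) / (sqrt (2 * pi) * \<sigma>))"
proof -
  define L where "L = real_of_ereal (lipS r K S0)"
  have "lipS r K S0 = ereal L"
    using assms(5,6) unfolding L_def by (auto intro: ereal_real'[symmetric])
  then have L: "lipS r K S0 = ereal L" "L > 0" using assms(5) by simp_all
  define \<epsilon> where "\<epsilon> = a * \<sigma> / L"
  \<comment> \<open>\<open>\<rho>\<close> makes the discretisation error the \<open>1 / sqrt (2 * pi)\<close> part of the bound\<close>
  define \<rho> where "\<rho> = \<sigma> * exp (- a\<^sup>2 / 2) / sqrt (2 * pi)"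
  have "\<epsilon> > 0" "\<rho> / L > 0" "L * \<epsilon> = a * \<sigma>" unfolding \<epsilon>_def \<rho>_def using assms(2,10) L(2) by auto
  obtain S where S: "finite S" "card S = covering_number \<epsilon> K" "\<forall>t\<in>K. \<exists>s\<in>S. dist s t \<le> \<epsilon>"
    using covering_number_obtain[OF assms(1) \<open>\<epsilon> > 0\<close>] .
  have "\<And>x. x \<in> S0 \<Longrightarrow> polyfun \<zeta> (r x)" using assms(4) polyfun_if_poly_deg_le by blast
  moreover have "\<And>x b1 b2. x \<in> S0 \<Longrightarrow> b1 \<in> K \<Longrightarrow> b2 \<in> K \<Longrightarrow> \<bar>r x b1 - r x b2\<bar> \<le> L * dist b1 b2"
    using lipS_lipschitz[OF L(1)] .
  ultimately obtain G' :: "(real ^ 'p) pmf" where G': "finite (set_pmf G')" "set_pmf G' \<subseteq> K"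
    "card (set_pmf G') \<le> (2 * nat \<lfloor>27 / 2 * a\<^sup>2\<rfloor> * \<zeta> + 1) ^ CARD('p) * card S + 1"
    "\<And>x y. x \<in> S0 \<Longrightarrow> \<bar>mix_density r \<sigma> G x y - mix_density r \<sigma> (measure_pmf G') x y\<bar>
       \<le> L * (\<rho> / L) / (\<sigma>\<^sup>2 * sqrt (2 * pi)) + exp (- a\<^sup>2 / 2) / (sqrt (2 * pi) * \<sigma>)"
    unfolding mix_density_gauss_kernel
    using gaussian_mixture_compression[OF assms(1) S(1,3) \<open>\<rho> / L > 0\<close> assms(7-9)]
      L(2) \<open>L * \<epsilon> = a * \<sigma>\<close> assms(2,10) by (metis less_imp_le)
  moreover have "L * (\<rho> / L) / (\<sigma>\<^sup>2 * sqrt (2 * pi)) + exp (- a\<^sup>2 / 2) / (sqrt (2 * pi) * \<sigma>)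
      = (1 + 1 / sqrt (2 * pi)) * exp (- a\<^sup>2 / 2) / (sqrt (2 * pi) * \<sigma>)"
    unfolding \<rho>_def using assms(2) L(2) by (simp add: field_simps power2_eq_square)
  ultimately show ?thesis using S(2) unfolding \<epsilon>_def L_def by auto
qed

end
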